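(* Let $\mathbb{F}_q$ be a finite field, $e\ge1$, and let $t\ge 2$ be an integer. Let $a\in\mathbb{F}_{q^e}^*$ have multiplicative order $o_a\ge t$. Let $f_{a,t}\in\mathbb{F}_q[x]$ be the product of the distinct polynomials among the minimal polynomials over $\mathbb{F}_q$ of $a^0,a^1,\dots,a^{t-1}$. Then the least-degree $t$-sparse multiple of $f_{a,t}$ in $\mathbb{F}_q[x]$ is $x^{o_a}-1$; that is, $f_{a,t}$ divides $x^{o_a}-1$, and every nonzero $t$-sparse multiple of $f_{a,t}$ in $\mathbb{F}_q[x]$ has degree at least $o_a$.
   Context: A polynomial is $t$-sparse if it has at most $t$ nonzero coefficients in the power basis. The multiplicative order of $a$ is the least positive integer $m$ with $a^m=1$. *)

theory Defs
  imports "HOL-Computational_Algebra.Polynomial"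
begin

definition mult_order :: "'a::monoid_mult \<Rightarrow> nat" where
  "mult_order a = (if \<exists>m>0. a ^ m = 1 then (LEAST m. m > 0 \<and> a ^ m = 1) else 0)"

definition t_sparse :: "nat \<Rightarrow> 'a::zero poly \<Rightarrow> bool" where
  "t_sparse t p \<longleftrightarrow> card {i. coeff p i \<noteq> 0} \<le> t"

definition min_poly :: "('k::field \<Rightarrow> 'K::field) \<Rightarrow> 'K \<Rightarrow> 'k poly" where
  "min_poly emb b = (THE p. lead_coeff p = 1 \<and> poly (map_poly emb p) b = 0 \<and>
      (\<forall>g. poly (map_poly emb g) b = 0 \<longrightarrow> p dvd g))"

end

theory Submission
  imports Defs
begin

text \<open>
  With \<open>o\<close> the order of \<open>a\<close>, every power \<open>a\<^sup>i\<close> is a root of \<open>x\<^sup>o - 1\<close>, so its minimal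
  polynomial, a monic prime, divides \<open>x\<^sup>o - 1\<close>; distinct monic primes are coprime, hence
  their product \<open>f\<close> divides \<open>x\<^sup>o - 1\<close> as well.

  Conversely, let \<open>g \<noteq> 0\<close> be a multiple of \<open>f\<close> with support \<open>E\<close>, \<open>|E| \<le> t\<close>, and
  \<open>deg g < o\<close>. Then \<open>g\<close> vanishes at \<open>a\<^sup>0, \<dots>, a\<^sup>t\<^sup>-\<^sup>1\<close>, i.e. \<open>\<Sum>\<^sub>e\<^sub>\<in>\<^sub>E c\<^sub>e (a\<^sup>e)\<^sup>i = 0\<close> for
  \<open>i < t\<close>, and the nodes \<open>a\<^sup>e\<close> are pairwise distinct because \<open>e < o\<close>. This transposed
  Vandermonde system forces all \<open>c\<^sub>e = 0\<close>: combining the equations with the coefficients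
  of \<open>\<Prod>\<^sub>e\<^sub>\<noteq>\<^sub>k (x - a\<^sup>e)\<close>, a polynomial of degree \<open>< t\<close>, isolates \<open>c\<^sub>k\<close>.
\<close>

lemma monic_dvd_antisym:
  fixes p q :: "'a::field poly"
  assumes "lead_coeff p = 1" "lead_coeff q = 1" "p dvd q" "q dvd p"
  shows "p = q"
proof -
  obtain u where u: "q = p * u" using assms(3) ..
  have "p \<noteq> 0" "q \<noteq> 0" using assms(1,2) by auto
  then have "degree p = degree q"
    using assms(3,4) by (simp add: dvd_imp_degree_le order_antisym)
  with u \<open>q \<noteq> 0\<close> have "degree u = 0" by (auto simp: degree_mult_eq)
  moreover have "lead_coeff u = 1" using u assms(1,2) by (simp add: lead_coeff_mult)
  ultimately have "u = 1" by (metis degree_0_id one_pCons)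
  with u show ?thesis by simp
qed

lemma monic_prime_elem_dvd_imp_eq:
  fixes p q :: "'a::field poly"
  assumes "lead_coeff p = 1" "lead_coeff q = 1" "prime_elem p" "prime_elem q" "p dvd q"
  shows "p = q"
proof -
  have "q dvd p"
    using irreducibleD'[OF prime_elem_imp_irreducible[OF assms(4)] assms(5)] assms(3)
    by (auto simp: prime_elem_not_unit)
  with assms(1,2,5) show ?thesis by (rule monic_dvd_antisym)
qed

lemma prod_monic_prime_elems_dvd:
  fixes P :: "'a::field poly set"
  assumes "finite P" "\<And>p. p \<in> P \<Longrightarrow> lead_coeff p = 1 \<and> prime_elem p \<and> p dvd h"
  shows "\<Prod>P dvd h"
  using assms
proof (induction P rule: finite_induct)
  case empty
  show ?case by simp
next
  case (insert p P)
  then have p: "lead_coeff p = 1" "prime_elem p" "p dvd h" by auto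
  obtain r where r: "h = \<Prod>P * r" using insert by blast
  have "\<not> p dvd \<Prod>P"
  proof
    assume "p dvd \<Prod>P"
    then obtain q where "q \<in> P" "p dvd q"
      using insert.hyps(1) by (auto simp: prod_unfold_prod_mset elim!: prime_elem_dvd_prod_msetE[OF p(2)])
    then show False
      using monic_prime_elem_dvd_imp_eq[OF p(1) _ p(2)] insert.hyps(2) insert.prems by blast
  qed
  then have "p dvd r" using p(2,3) r by (simp add: prime_elem_dvd_mult_iff)
  then show ?case using r insert.hyps by (simp add: mult_dvd_mono)
qed

lemma ex_power_eq_1:
  fixes x :: "'a::{field,finite}"
  assumes "x \<noteq> 0"
  shows "\<exists>m>0. x ^ m = 1"
proof -
  have "\<not> inj (\<lambda>i::nat. x ^ i)"
    using finite_imageD[of "\<lambda>i::nat. x ^ i" UNIV] by auto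
  then obtain i j where "i < j" "x ^ i = x ^ j"
    unfolding inj_def by (metis linorder_neqE_nat)
  then have "x ^ i * x ^ (j - i) = x ^ i * 1"
    using power_add[of x i "j - i"] by simp
  with assms \<open>i < j\<close> show ?thesis by (intro exI[of _ "j - i"]) simp
qed

lemma
  fixes x :: "'a::monoid_mult"
  assumes "\<exists>m>0. x ^ m = 1"
  shows mult_order_pos: "0 < mult_order x"
    and power_mult_order: "x ^ mult_order x = 1"
proof -
  have "0 < mult_order x \<and> x ^ mult_order x = 1"
    unfolding mult_order_def using assms by (simp add: LeastI_ex[OF assms])
  then show "0 < mult_order x" "x ^ mult_order x = 1" by auto
qed

lemma power_neq_1_below_mult_order:
  fixes x :: "'a::monoid_mult"
  assumes "0 < m" "m < mult_order x"
  shows "x ^ m \<noteq> 1"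
  using assms not_less_Least[of m "\<lambda>m. m > 0 \<and> x ^ m = 1"]
  by (auto simp: mult_order_def split: if_splits)

lemma inj_on_power_mult_order:
  fixes x :: "'a::monoid_mult"
  assumes "\<exists>m>0. x ^ m = 1"
  shows "inj_on (\<lambda>i. x ^ i) {..<mult_order x}"
proof -
  have "x ^ i \<noteq> x ^ j" if "i < j" "j < mult_order x" for i j
  proof
    assume eq: "x ^ i = x ^ j"
    have split: "x ^ (mult_order x - j) * x ^ j = 1" "x ^ i * x ^ (j - i) = x ^ j"
      using that power_mult_order[OF assms] by (simp_all flip: power_add)
    have "x ^ (j - i) = x ^ (mult_order x - j) * x ^ j * x ^ (j - i)"
      using split(1) by simp
    also have "\<dots> = x ^ (mult_order x - j) * (x ^ i * x ^ (j - i))"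
      by (simp only: eq mult.assoc)
    also have "\<dots> = 1"
      using split by simp
    finally show False
      using power_neq_1_below_mult_order[of "j - i" x] that by simp
  qed
  then show ?thesis
    unfolding inj_on_def by (metis lessThan_iff linorder_neqE_nat)
qed

lemma power_sums_eq_0_imp_coeff_eq_0:
  fixes c \<beta> :: "'i \<Rightarrow> 'a::field"
  assumes "finite E" "card E \<le> t" "inj_on \<beta> E" "k \<in> E"
    and sums: "\<And>i. i < t \<Longrightarrow> (\<Sum>e\<in>E. c e * \<beta> e ^ i) = 0"
  shows "c k = 0"
proof -
  define L where "L = (\<Prod>e\<in>E - {k}. [:- \<beta> e, 1:])"
  have "degree L \<le> card (E - {k})"
    unfolding L_def using degree_prod_sum_le[of "E - {k}" "\<lambda>e. [:- \<beta> e, 1:]"] assms(1)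
    by simp
  moreover have "card E > 0" using assms(1,4) card_gt_0_iff by blast
  ultimately have "degree L < t" using assms(1,2,4) by simp
  then have poly_L: "poly L x = (\<Sum>i<t. coeff L i * x ^ i)" for x
    unfolding poly_altdef by (intro sum.mono_neutral_left) (auto simp: coeff_eq_0)
  have "0 = (\<Sum>i<t. coeff L i * (\<Sum>e\<in>E. c e * \<beta> e ^ i))"
    using sums by simp
  also have "\<dots> = (\<Sum>e\<in>E. c e * poly L (\<beta> e))"
    by (simp add: poly_L sum_distrib_left sum.swap[of _ E] algebra_simps)
  also have "\<dots> = c k * poly L (\<beta> k)"
    using assms(1,4) by (auto simp: sum.remove L_def poly_prod intro!: sum.neutral)
  finally have "c k * poly L (\<beta> k) = 0" ..
  moreover have "poly L (\<beta> k) \<noteq> 0"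
    using assms(1,3,4) by (auto simp: L_def poly_prod inj_on_def)
  ultimately show ?thesis by simp
qed

lemma t_sparse_vanishing_at_powers_eq_0:
  fixes p :: "'a::field poly"
  assumes "t_sparse t p" "inj_on (\<lambda>e. a ^ e) {..degree p}"
    and vanish: "\<And>i. i < t \<Longrightarrow> poly p (a ^ i) = 0"
  shows "p = 0"
proof (rule ccontr)
  assume "p \<noteq> 0"
  define E where "E = {e. coeff p e \<noteq> 0}"
  have E_le: "E \<subseteq> {..degree p}" by (auto simp: E_def le_degree)
  have "finite E" using E_le finite_subset by blast
  moreover have "card E \<le> t" using assms(1) by (simp add: t_sparse_def E_def)
  moreover have "inj_on (\<lambda>e. a ^ e) E" using assms(2) E_le by (rule inj_on_subset)
  moreover have "degree p \<in> E" using \<open>p \<noteq> 0\<close> by (simp add: E_def)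
  moreover have "(\<Sum>e\<in>E. coeff p e * (a ^ e) ^ i) = 0" if "i < t" for i
  proof -
    have "poly p (a ^ i) = (\<Sum>e\<le>degree p. coeff p e * (a ^ e) ^ i)"
      by (simp add: poly_altdef mult.commute flip: power_mult)
    also have "\<dots> = (\<Sum>e\<in>E. coeff p e * (a ^ e) ^ i)"
      using E_le by (intro sum.mono_neutral_right) (auto simp: E_def)
    finally show ?thesis using vanish that by simp
  qed
  ultimately have "coeff p (degree p) = 0" by (rule power_sums_eq_0_imp_coeff_eq_0)
  with \<open>p \<noteq> 0\<close> show False by simp
qed

lemma monom_1_minus_1_neq_0:
  assumes "0 < n"
  shows "monom (1::'a::comm_ring_1) n - 1 \<noteq> 0"
proof
  assume "monom (1::'a) n - 1 = 0"
  then have "coeff (monom (1::'a) n - 1) n = 0" by simp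
  with assms show False by simp
qed

locale field_embedding =
  fixes emb :: "'k::field \<Rightarrow> 'K::field"
  assumes emb_add: "emb (x + y) = emb x + emb y"
    and emb_mult: "emb (x * y) = emb x * emb y"
    and emb_one: "emb 1 = 1"
begin

lemma emb_0 [simp]: "emb 0 = 0"
  using emb_add[of 0 0] by (metis add.right_neutral add_left_cancel)

lemma emb_eq_0_iff [simp]: "emb x = 0 \<longleftrightarrow> x = 0"
  using emb_mult[of x "inverse x"] emb_one by (cases "x = 0") auto

lemma emb_sum: "emb (sum f A) = (\<Sum>i\<in>A. emb (f i))"
  by (induction A rule: infinite_finite_induct) (auto simp: emb_add)

lemma coeff_map_poly_emb [simp]: "coeff (map_poly emb p) n = emb (coeff p n)"
  by (simp add: coeff_map_poly)

lemma degree_map_poly_emb [simp]: "degree (map_poly emb p) = degree p"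
  by (simp add: degree_map_poly)

lemma map_poly_emb_eq_0_iff [simp]: "map_poly emb p = 0 \<longleftrightarrow> p = 0"
  by (simp add: map_poly_eq_0_iff)

lemma map_poly_emb_add: "map_poly emb (p + q) = map_poly emb p + map_poly emb q"
  by (intro poly_eqI) (simp add: emb_add)

lemma map_poly_emb_mult: "map_poly emb (p * q) = map_poly emb p * map_poly emb q"
  by (intro poly_eqI) (simp add: coeff_mult emb_sum emb_mult)

lemma poly_map_poly_emb_monom_1_minus_1:
  "poly (map_poly emb (monom 1 n - 1)) b = b ^ n - 1"
proof -
  have "map_poly emb (monom 1 n - 1) + map_poly emb 1 = map_poly emb (monom 1 n)"
    by (simp flip: map_poly_emb_add)
  then have "map_poly emb (monom 1 n - 1) = monom 1 n - 1"
    by (simp add: emb_one map_poly_monom eq_diff_eq)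
  then show ?thesis by (simp add: poly_monom)
qed

lemma t_sparse_map_poly_emb [simp]: "t_sparse t (map_poly emb p) \<longleftrightarrow> t_sparse t p"
  by (simp add: t_sparse_def)

lemma ex_monic_vanishing_generator:
  assumes "g \<noteq> 0" "poly (map_poly emb g) b = 0"
  shows "\<exists>p. lead_coeff p = 1 \<and> poly (map_poly emb p) b = 0 \<and>
    (\<forall>h. poly (map_poly emb h) b = 0 \<longrightarrow> p dvd h)"
proof -
  obtain p0 where p0: "p0 \<noteq> 0" "poly (map_poly emb p0) b = 0"
    and least: "\<And>h. h \<noteq> 0 \<Longrightarrow> poly (map_poly emb h) b = 0 \<Longrightarrow> degree p0 \<le> degree h"
    using ex_has_least_nat[of "\<lambda>h. h \<noteq> 0 \<and> poly (map_poly emb h) b = 0" g degree] assms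
    by blast
  define p where "p = smult (inverse (lead_coeff p0)) p0"
  have monic: "lead_coeff p = 1" using p0(1) by (simp add: p_def)
  have vanish: "poly (map_poly emb p) b = 0"
    using p0(2) by (simp add: p_def map_poly_smult emb_mult)
  have "p dvd h" if "poly (map_poly emb h) b = 0" for h
  proof (rule ccontr)
    assume "\<not> p dvd h"
    then have "h mod p \<noteq> 0" by (simp add: mod_eq_0_iff_dvd)
    moreover have "poly (map_poly emb (h mod p)) b = 0"
      using that vanish div_mult_mod_eq[of h p]
      by (metis add_0 map_poly_emb_add map_poly_emb_mult mult_zero_right poly_add poly_mult)
    ultimately have "degree p \<le> degree (h mod p)"
      using least p0(1) by (simp add: p_def)
    moreover have "degree (h mod p) < degree p"
      using \<open>h mod p \<noteq> 0\<close> monic by (intro degree_mod_less') auto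
    ultimately show False by simp
  qed
  with monic vanish show ?thesis by blast
qed

lemma
  assumes "g \<noteq> 0" "poly (map_poly emb g) b = 0"
  shows lead_coeff_min_poly: "lead_coeff (min_poly emb b) = 1"
    and min_poly_dvd_iff: "min_poly emb b dvd h \<longleftrightarrow> poly (map_poly emb h) b = 0"
proof -
  let ?P = "\<lambda>p. lead_coeff p = 1 \<and> poly (map_poly emb p) b = 0 \<and>
    (\<forall>h. poly (map_poly emb h) b = 0 \<longrightarrow> p dvd h)"
  have "\<exists>!p. ?P p"
    using ex_monic_vanishing_generator[OF assms] monic_dvd_antisym by blast
  then have "?P (min_poly emb b)"
    unfolding min_poly_def by (rule theI')
  then show "lead_coeff (min_poly emb b) = 1"
    and "min_poly emb b dvd h \<longleftrightarrow> poly (map_poly emb h) b = 0"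
    by (auto simp: map_poly_emb_mult elim!: dvdE)
qed

lemma prime_elem_min_poly:
  assumes "g \<noteq> 0" "poly (map_poly emb g) b = 0"
  shows "prime_elem (min_poly emb b)"
proof (rule prime_elemI)
  show "min_poly emb b \<noteq> 0" using lead_coeff_min_poly[OF assms] by auto
  show "\<not> min_poly emb b dvd 1" using min_poly_dvd_iff[OF assms] by (simp add: emb_one)
  show "min_poly emb b dvd p \<or> min_poly emb b dvd q" if "min_poly emb b dvd p * q" for p q
    using that by (simp add: min_poly_dvd_iff[OF assms] map_poly_emb_mult)
qed

end

theorem theorem5p1:
  fixes emb :: "'k::{field,finite} \<Rightarrow> 'K::{field,finite}"
    and a :: 'K and t :: nat
  assumes emb_add: "\<And>x y. emb (x + y) = emb x + emb y"
    and emb_mult: "\<And>x y. emb (x * y) = emb x * emb y"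
    and emb_one: "emb 1 = 1"
    and t2: "t \<ge> 2"
    and a_nz: "a \<noteq> 0"
    and ord_ge: "mult_order a \<ge> t"
  defines "f \<equiv> \<Prod>(min_poly emb ` (\<lambda>i. a ^ i) ` {..<t})"
  shows "f dvd (monom 1 (mult_order a) - 1) \<and>
    (\<forall>g. g \<noteq> 0 \<and> f dvd g \<and> t_sparse t g \<longrightarrow> degree g \<ge> mult_order a)"
proof -
  interpret field_embedding emb by unfold_locales (fact emb_add emb_mult emb_one)+
  have ord: "\<exists>m>0. a ^ m = 1" using a_nz by (rule ex_power_eq_1)
  let ?X = "monom 1 (mult_order a) - 1 :: 'k poly"
  have "(a ^ i) ^ mult_order a = 1" for i
    by (metis mult.commute power_mult power_mult_order[OF ord] power_one)
  then have X: "?X \<noteq> 0" "poly (map_poly emb ?X) (a ^ i) = 0" for i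
    using monom_1_minus_1_neq_0[OF mult_order_pos[OF ord]]
    by (simp_all add: poly_map_poly_emb_monom_1_minus_1)
  note min_poly_a = lead_coeff_min_poly[OF X] prime_elem_min_poly[OF X] min_poly_dvd_iff[OF X]
  have "f dvd ?X"
    unfolding f_def using X(2) by (intro prod_monic_prime_elems_dvd) (auto simp: min_poly_a)
  moreover have "mult_order a \<le> degree g" if "g \<noteq> 0" "f dvd g" "t_sparse t g" for g
  proof (rule ccontr)
    assume "\<not> mult_order a \<le> degree g"
    then have "inj_on (\<lambda>e. a ^ e) {..degree g}"
      by (auto intro: inj_on_subset[OF inj_on_power_mult_order[OF ord]])
    moreover have "poly (map_poly emb g) (a ^ i) = 0" if "i < t" for i
    proof -
      have "min_poly emb (a ^ i) dvd f" unfolding f_def using that by (intro dvd_prodI) auto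
      with \<open>f dvd g\<close> show ?thesis by (metis dvd_trans min_poly_a(3))
    qed
    ultimately have "map_poly emb g = 0"
      using \<open>t_sparse t g\<close> by (intro t_sparse_vanishing_at_powers_eq_0) auto
    with \<open>g \<noteq> 0\<close> show False by simp
  qed
  ultimately show ?thesis by blast
qed

end
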